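(* Let $\underline{A}=(A_1,\dots,A_k)$ be a locally constant cocycle over a Bernoulli shift on $\{1,\dots,k\}^{\mathbb Z}$ with $\mathrm{rank}(A_i)=1$ for all $i$. Then either $d(\mathscr{K}(\underline{A}),\mathscr{R}(\underline{A}))>0$ and $\underline{A}$ is projectively uniformly hyperbolic, or $d(\mathscr{K}(\underline{A}),\mathscr{R}(\underline{A}))=0$, $\underline{A}$ admits a null word, and $L_1(\underline{A})=-\infty$.
   Context: Base: $X=\{1,\dots,k\}^{\mathbb Z}$ with Bernoulli measure $p^{\mathbb Z}$ ($p_i>0$), $\sigma$ the shift; cocycle $F(\omega,v)=(\sigma\omega,A_{\omega_1}v)$, $A^n(\omega)=A_{\omega_n}\cdots A_{\omega_1}$, $L_1=\lim_n\frac1n\log\|A^n(\omega)\|\in[-\infty,\infty)$ a.e. $\mathscr{K}(\underline A)=\{\mathrm{Ker}A_i\}_i$ and $\mathscr{R}(\underline A)=\{\mathrm{Range}A_i\}_i$, finite subsets of the projective line $\mathbb{P}^1$, and $d$ is the distance between these sets for a standard metric on $\mathbb{P}^1$. A null word is a finite word $\omega_1\dots\omega_n$ with $A_{\omega_n}\cdots A_{\omega_1}=0$. Projectively uniformly hyperbolic: continuous invariant line fields $E_0,E_1$ with $\mathbb R^2=E_0(\omega)\oplus E_1(\omega)$ and $n$ with $\|A^n(\omega)|_{E_0}\|<\|A^n(\omega)|_{E_1}\|$ for all $\omega$. *)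

theory Defs
  imports "HOL-Analysis.Analysis" "HOL-Probability.Probability"
begin

type_synonym mat2 = "real^2^2"

text \<open>The shift space X = {1..k}^Z, as sequences indexed by the integers.
  It carries the product topology (Function_Topology) of the discrete topology on nat.\<close>
definition shift_space :: "nat \<Rightarrow> (int \<Rightarrow> nat) set" where
  "shift_space k = {\<omega>. \<forall>i. \<omega> i \<in> {1..k}}"

definition shift :: "(int \<Rightarrow> nat) \<Rightarrow> (int \<Rightarrow> nat)" where
  "shift \<omega> = (\<lambda>i. \<omega> (i + 1))"

definition bernoulli_measure :: "nat pmf \<Rightarrow> (int \<Rightarrow> nat) measure" where
  "bernoulli_measure p = PiM UNIV (\<lambda>_::int. measure_pmf p)"

fun cocycle :: "(nat \<Rightarrow> mat2) \<Rightarrow> nat \<Rightarrow> (int \<Rightarrow> nat) \<Rightarrow> mat2" where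
  "cocycle A 0 \<omega> = mat 1"
| "cocycle A (Suc n) \<omega> = A (\<omega> (int (Suc n))) ** cocycle A n \<omega>"

definition matnorm :: "mat2 \<Rightarrow> real" where
  "matnorm M = onorm (\<lambda>x. M *v x)"

definition eln :: "real \<Rightarrow> ereal" where
  "eln x = (if x = 0 then -\<infinity> else ereal (ln x))"

definition L1_minus_infty :: "nat pmf \<Rightarrow> (nat \<Rightarrow> mat2) \<Rightarrow> bool" where
  "L1_minus_infty p A \<longleftrightarrow>
     (AE \<omega> in bernoulli_measure p.
        ((\<lambda>n. ereal (1 / real n) * eln (matnorm (cocycle A n \<omega>))) \<longlongrightarrow> -\<infinity>) sequentially)"

text \<open>Lines (points of P^1) are 1-dimensional subspaces of R^2.\<close>
definition ker_line :: "mat2 \<Rightarrow> (real^2) set" where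
  "ker_line M = {v. M *v v = 0}"

definition range_line :: "mat2 \<Rightarrow> (real^2) set" where
  "range_line M = range (\<lambda>v. M *v v)"

text \<open>Standard metric on P^1: the sine of the angle between two lines, i.e. the
  distance from a unit vector of one line to the other line.\<close>
definition pdist :: "(real^2) set \<Rightarrow> (real^2) set \<Rightarrow> real" where
  "pdist L M = (INF u \<in> {u \<in> L. norm u = 1}. infdist u M)"

definition kernels :: "nat \<Rightarrow> (nat \<Rightarrow> mat2) \<Rightarrow> (real^2) set set" where
  "kernels k A = ker_line ` A ` {1..k}"

definition ranges :: "nat \<Rightarrow> (nat \<Rightarrow> mat2) \<Rightarrow> (real^2) set set" where
  "ranges k A = range_line ` A ` {1..k}"

definition setdist_P1 :: "(real^2) set set \<Rightarrow> (real^2) set set \<Rightarrow> real" where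
  "setdist_P1 K R = (INF LM \<in> K \<times> R. pdist (fst LM) (snd LM))"

definition word_prod :: "(nat \<Rightarrow> mat2) \<Rightarrow> nat list \<Rightarrow> mat2" where
  "word_prod A w = foldl (\<lambda>M i. A i ** M) (mat 1) w"

definition has_null_word :: "nat \<Rightarrow> (nat \<Rightarrow> mat2) \<Rightarrow> bool" where
  "has_null_word k A \<longleftrightarrow> (\<exists>w. w \<noteq> [] \<and> set w \<subseteq> {1..k} \<and> word_prod A w = 0)"

text \<open>A line field is represented by the orthogonal projection onto the line;
  continuity of the line field (as a map into P^1) is continuity of the projection.\<close>
definition line_proj :: "mat2 \<Rightarrow> bool" where
  "line_proj P \<longleftrightarrow> P ** P = P \<and> transpose P = P \<and> rank P = 1"

definition proj_unif_hyperbolic :: "nat \<Rightarrow> (nat \<Rightarrow> mat2) \<Rightarrow> bool" where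
  "proj_unif_hyperbolic k A \<longleftrightarrow>
     (\<exists>E0 E1 :: (int \<Rightarrow> nat) \<Rightarrow> mat2.
        (\<forall>\<omega>\<in>shift_space k. line_proj (E0 \<omega>) \<and> line_proj (E1 \<omega>)) \<and>
        continuous_on (shift_space k) E0 \<and> continuous_on (shift_space k) E1 \<and>
        (\<forall>\<omega>\<in>shift_space k. range_line (E0 \<omega>) \<inter> range_line (E1 \<omega>) = {0}) \<and>
        (\<forall>\<omega>\<in>shift_space k. \<forall>v.
           A (\<omega> 1) *v (E0 \<omega> *v v) \<in> range_line (E0 (shift \<omega>)) \<and>
           A (\<omega> 1) *v (E1 \<omega> *v v) \<in> range_line (E1 (shift \<omega>))) \<and>
        (\<exists>n. \<forall>\<omega>\<in>shift_space k.
           matnorm (cocycle A n \<omega> ** E0 \<omega>) < matnorm (cocycle A n \<omega> ** E1 \<omega>)))"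

end

theory Submission
  imports Defs
begin

text \<open>For matrices of rank one, \<open>A\<^sub>i A\<^sub>j = 0\<close> exactly when \<open>Ker A\<^sub>i = Range A\<^sub>j\<close>.
  If no kernel equals a range, each kernel is a line different from each range, so the finite
  sets of kernels and ranges are at positive distance, and the locally constant line fields
  \<open>E\<^sub>0(\<omega>) = Ker A\<^sub>\<omega>\<^sub>1\<close>, \<open>E\<^sub>1(\<omega>) = Range A\<^sub>\<omega>\<^sub>0\<close> are invariant; since \<open>A\<^sub>\<omega>\<^sub>1\<close>
  annihilates \<open>E\<^sub>0(\<omega>)\<close> but not \<open>E\<^sub>1(\<omega>)\<close>, domination holds already at time one.
  Otherwise \<open>A\<^sub>i A\<^sub>j = 0\<close> for some \<open>i, j\<close>, so the word \<open>j i\<close> is null; by independence of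
  disjoint blocks of coordinates, almost every \<open>\<omega>\<close> contains it, after which the cocycle vanishes
  identically, so \<open>L\<^sub>1 = -\<infinity>\<close>.\<close>

definition line :: "(real^2) set \<Rightarrow> bool" where
  "line L \<longleftrightarrow> subspace L \<and> dim L = 1"

lemma line_eq_span:
  assumes "line L" "u \<in> L" "u \<noteq> 0"
  shows "L = span {u}"
proof -
  have "dim (span {u}) = 1"
    using assms(3) by (simp add: dim_span_eq_card_independent)
  then show ?thesis
    using assms by (intro subspace_dim_equal[symmetric]) (auto simp: line_def span_minimal)
qed

lemma line_unit_vector:
  assumes "line L"
  obtains u where "u \<in> L" "norm u = 1"
proof -
  obtain a where a: "a \<in> L" "a \<noteq> 0"
    using assms unfolding line_def by (metis dim_eq_0 subsetI singletonI zero_neq_one)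
  then have "a /\<^sub>R norm a \<in> L"
    using assms by (simp add: line_def subspace_scale)
  with a that show ?thesis by auto
qed

lemma line_inter_eq_0:
  assumes "line L" "line M" "L \<noteq> M"
  shows "L \<inter> M = {0}"
proof -
  have "x = 0" if "x \<in> L" "x \<in> M" for x
    using line_eq_span[OF assms(1) that(1)] line_eq_span[OF assms(2) that(2)] assms(3) by auto
  moreover have "0 \<in> L \<inter> M"
    using assms by (simp add: line_def subspace_0)
  ultimately show ?thesis by blast
qed

lemma line_range_line:
  "rank M = 1 \<Longrightarrow> line (range_line M)"
  unfolding line_def range_line_def by (simp add: rank_dim_range linear_subspace_image)

lemma line_ker_line:
  fixes M :: mat2
  assumes "rank M = 1"
  shows "line (ker_line M)"
proof -
  have subspace: "subspace (ker_line M)"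
    unfolding ker_line_def by (simp add: subspace_def matrix_vector_right_distrib matrix_vector_mult_scaleR)
  have "rank M \<noteq> CARD(2)"
    using assms by simp
  then obtain x where "x \<noteq> 0" "M *v x = 0"
    using matrix_nonfull_linear_equations_eq by blast
  then have "dim (ker_line M) \<noteq> 0"
    by (auto simp: ker_line_def)
  moreover have "dim (ker_line M) \<noteq> 2"
  proof
    assume "dim (ker_line M) = 2"
    then have "span (ker_line M) = UNIV"
      using dim_eq_full[of "ker_line M"] by simp
    then have "ker_line M = UNIV"
      using subspace by (metis span_eq_iff)
    then have "M = 0"
      by (simp add: ker_line_def matrix_eq set_eq_iff)
    then show False
      using assms by simp
  qed
  moreover have "dim (ker_line M) \<le> 2"
    using dim_subset_UNIV_cart[of "ker_line M"] by simp
  ultimately show ?thesis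
    using subspace unfolding line_def by linarith
qed

lemma matrix_mul_eq_0_iff_range_subset_ker:
  "M ** P = 0 \<longleftrightarrow> range_line P \<subseteq> ker_line M"
  by (auto simp: matrix_eq range_line_def ker_line_def matrix_vector_mul_assoc[symmetric])

lemma matrix_mul_neq_0_if_transversal:
  assumes "line (range_line P)" "range_line P \<inter> ker_line M = {0}"
  shows "M ** P \<noteq> 0"
proof
  assume "M ** P = 0"
  then have "range_line P = {0}"
    using assms(2) by (auto simp: matrix_mul_eq_0_iff_range_subset_ker)
  moreover obtain u where "u \<in> range_line P" "norm u = 1"
    using line_unit_vector assms(1) by blast
  ultimately show False
    by auto
qed

lemma matnorm_eq_0_iff: "matnorm M = 0 \<longleftrightarrow> M = 0"
  by (simp add: matnorm_def onorm_eq_0 linear_conv_bounded_linear matrix_eq)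

lemma matnorm_0 [simp]: "matnorm 0 = 0"
  by (simp add: matnorm_eq_0_iff)

lemma matnorm_nonneg: "0 \<le> matnorm M"
  by (simp add: matnorm_def onorm_pos_le linear_conv_bounded_linear)

lemma pdist_nonneg:
  assumes "line L"
  shows "0 \<le> pdist L M"
proof -
  obtain u where "u \<in> L" "norm u = 1"
    using line_unit_vector assms by blast
  then show ?thesis
    unfolding pdist_def by (intro cINF_greatest) (auto simp: infdist_nonneg)
qed

lemma pdist_self:
  assumes "line L"
  shows "pdist L L = 0"
proof -
  obtain u where u: "u \<in> L" "norm u = 1"
    using line_unit_vector assms by blast
  have "pdist L L \<le> infdist u L"
    unfolding pdist_def
    by (rule cINF_lower) (auto simp: u bdd_below_def intro!: exI[of _ 0] infdist_nonneg)
  with u have "pdist L L \<le> 0"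
    by simp
  then show ?thesis
    using pdist_nonneg[OF assms, of L] by simp
qed

lemma pdist_pos:
  assumes "line L" "line M" "L \<noteq> M"
  shows "pdist L M > 0"
proof -
  define S where "S = {u \<in> L. norm u = 1}"
  have closed: "closed L" "closed M"
    using assms closed_subspace unfolding line_def by auto
  have "S = L \<inter> sphere 0 1"
    by (auto simp: S_def)
  then have "compact S"
    using closed by (simp add: closed_Int_compact)
  moreover have "S \<noteq> {}"
    using line_unit_vector[OF assms(1)] unfolding S_def by blast
  moreover have "continuous_on S (\<lambda>v. infdist v M)"
    by (intro continuous_intros)
  ultimately have "\<exists>x\<in>S. \<forall>y\<in>S. infdist x M \<le> infdist y M"
    by (rule continuous_attains_inf)
  then obtain x where x: "x \<in> S" "\<forall>y\<in>S. infdist x M \<le> infdist y M"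
    by auto
  have "x \<in> L" "x \<noteq> 0"
    using x(1) by (auto simp: S_def)
  then have "x \<notin> M"
    using line_inter_eq_0[OF assms] by blast
  moreover have "0 \<in> M"
    using assms(2) by (simp add: line_def subspace_0)
  ultimately have "infdist x M > 0"
    using infdist_pos_not_in_closed[OF closed(2)] by blast
  moreover have "infdist x M \<le> pdist L M"
    unfolding pdist_def S_def[symmetric] using x \<open>S \<noteq> {}\<close> by (intro cINF_greatest) auto
  ultimately show ?thesis by simp
qed

lemma setdist_P1_eq_0:
  assumes "\<forall>L\<in>K. line L" "L \<in> K" "L \<in> R"
  shows "setdist_P1 K R = 0"
  unfolding setdist_P1_def
proof (rule cInf_eq_minimum)
  show "0 \<in> (\<lambda>LM. pdist (fst LM) (snd LM)) ` (K \<times> R)"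
    using assms pdist_self by (force intro!: image_eqI[of _ _ "(L, L)"])
  show "\<And>d. d \<in> (\<lambda>LM. pdist (fst LM) (snd LM)) ` (K \<times> R) \<Longrightarrow> 0 \<le> d"
    using assms(1) pdist_nonneg by auto
qed

lemma setdist_P1_pos:
  assumes "finite K" "finite R" "K \<noteq> {}" "R \<noteq> {}"
    and "\<forall>L\<in>K. line L" "\<forall>M\<in>R. line M" "K \<inter> R = {}"
  shows "setdist_P1 K R > 0"
proof -
  let ?D = "(\<lambda>LM. pdist (fst LM) (snd LM)) ` (K \<times> R)"
  have "finite ?D" "?D \<noteq> {}"
    using assms(1-4) by auto
  moreover have "\<forall>d\<in>?D. 0 < d"
    using assms(5-7) pdist_pos by fastforce
  ultimately show ?thesis
    unfolding setdist_P1_def by (simp add: cInf_eq_Min)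
qed

definition unit_proj :: "real^2 \<Rightarrow> mat2" where
  "unit_proj u = (\<chi> r c. u$r * u$c)"

lemma unit_proj_apply: "unit_proj u *v x = (u \<bullet> x) *\<^sub>R u"
  by (simp add: vec_eq_iff unit_proj_def matrix_vector_mult_def inner_vec_def sum_distrib_left
      sum_distrib_right mult.commute mult.left_commute)

lemma range_line_unit_proj:
  assumes "norm u = 1"
  shows "range_line (unit_proj u) = span {u}"
proof -
  have "u \<bullet> (t *\<^sub>R u) = t" for t
    using assms by (simp add: power2_norm_eq_inner[symmetric])
  then have "t *\<^sub>R u \<in> range_line (unit_proj u)" for t
    unfolding range_line_def unit_proj_apply by (metis rangeI)
  then show ?thesis
    unfolding range_line_def unit_proj_apply span_singleton by auto
qed

lemma line_proj_unit_proj: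
  assumes "norm u = 1"
  shows "line_proj (unit_proj u)"
proof -
  have "u \<bullet> u = 1"
    using assms by (simp add: power2_norm_eq_inner[symmetric])
  then have "unit_proj u ** unit_proj u = unit_proj u"
    by (simp add: matrix_eq matrix_vector_mul_assoc[symmetric] unit_proj_apply)
  moreover have "transpose (unit_proj u) = unit_proj u"
    by (simp add: vec_eq_iff transpose_def unit_proj_def mult.commute)
  moreover have "rank (unit_proj u) = 1"
    using range_line_unit_proj[OF assms] assms
    by (auto simp: rank_dim_range range_line_def dim_span_eq_card_independent)
  ultimately show ?thesis
    unfolding line_proj_def by blast
qed

lemma line_proj_onto_line:
  assumes "line L"
  shows "\<exists>P. line_proj P \<and> range_line P = L"
proof -
  obtain u where u: "u \<in> L" "norm u = 1"
    using line_unit_vector assms by blast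
  then have "L = span {u}"
    using line_eq_span[OF assms u(1)] by force
  then show ?thesis
    using line_proj_unit_proj[OF u(2)] range_line_unit_proj[OF u(2)] by blast
qed

lemma line_proj_family:
  assumes "\<forall>i\<in>I. line (L i)"
  obtains P where "\<forall>i\<in>I. line_proj (P i) \<and> range_line (P i) = L i"
proof -
  have "\<forall>i\<in>I. \<exists>P. line_proj P \<and> range_line P = L i"
    using assms line_proj_onto_line by blast
  from bchoice[OF this] obtain P where "\<forall>i\<in>I. line_proj (P i) \<and> range_line (P i) = L i" ..
  then show ?thesis
    by (rule that)
qed

lemma continuous_on_discrete_coordinate:
  fixes g :: "'b::discrete_topology \<Rightarrow> 'c::topological_space"
  shows "continuous_on S (\<lambda>\<omega>::'a \<Rightarrow> 'b. g (\<omega> t))"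
proof -
  have "continuous_on UNIV g"
    by (simp add: continuous_on_def at_discrete)
  then have "continuous_on UNIV (\<lambda>\<omega>::'a \<Rightarrow> 'b. g (\<omega> t))"
    by (rule continuous_on_compose2[OF _ continuous_on_product_coordinates]) auto
  then show ?thesis
    by (rule continuous_on_subset) auto
qed

lemma ker_line_inter_range_line_eq_0:
  assumes "\<forall>i\<in>{1..k}. rank (A i) = 1" "kernels k A \<inter> ranges k A = {}"
    and "i \<in> {1..k}" "j \<in> {1..k}"
  shows "ker_line (A i) \<inter> range_line (A j) = {0}"
proof (rule line_inter_eq_0)
  show "line (ker_line (A i))" "line (range_line (A j))"
    using line_ker_line line_range_line assms(1,3,4) by auto
  have "ker_line (A i) \<in> kernels k A" "range_line (A j) \<in> ranges k A"
    using assms(3,4) unfolding kernels_def ranges_def by simp_all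
  then show "ker_line (A i) \<noteq> range_line (A j)"
    using assms(2) by (metis IntI empty_iff)
qed

lemma proj_unif_hyperbolicI:
  assumes proj: "\<And>i. i \<in> {1..k} \<Longrightarrow> line_proj (P i) \<and> line_proj (Q i)"
    and transversal: "\<And>i j. i \<in> {1..k} \<Longrightarrow> j \<in> {1..k} \<Longrightarrow> range_line (P i) \<inter> range_line (Q j) = {0}"
    and kill: "\<And>i. i \<in> {1..k} \<Longrightarrow> A i ** P i = 0"
    and keep: "\<And>i j. i \<in> {1..k} \<Longrightarrow> j \<in> {1..k} \<Longrightarrow> A i ** Q j \<noteq> 0"
    and range: "\<And>i. i \<in> {1..k} \<Longrightarrow> range_line (Q i) = range_line (A i)"
  shows "proj_unif_hyperbolic k A"
proof -
  define E0 where "E0 \<omega> = P (\<omega> 1)" for \<omega> :: "int \<Rightarrow> nat"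
  define E1 where "E1 \<omega> = Q (\<omega> 0)" for \<omega> :: "int \<Rightarrow> nat"
  have coords: "\<omega> 0 \<in> {1..k}" "\<omega> 1 \<in> {1..k}" if "\<omega> \<in> shift_space k" for \<omega>
    using that by (auto simp: shift_space_def)
  show ?thesis
    unfolding proj_unif_hyperbolic_def
  proof (rule exI[of _ E0], rule exI[of _ E1], intro exI[of _ 1] conjI ballI allI)
    show "continuous_on (shift_space k) E0" "continuous_on (shift_space k) E1"
      unfolding E0_def E1_def by (rule continuous_on_discrete_coordinate)+
  next
    fix \<omega> assume "\<omega> \<in> shift_space k"
    then show "line_proj (E0 \<omega>)" "line_proj (E1 \<omega>)"
      "range_line (E0 \<omega>) \<inter> range_line (E1 \<omega>) = {0}"
      using proj transversal coords by (simp_all add: E0_def E1_def)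
  next
    fix \<omega> v assume "\<omega> \<in> shift_space k"
    then have kill\<omega>: "A (\<omega> 1) ** P (\<omega> 1) = 0"
      and range\<omega>: "range_line (E1 (shift \<omega>)) = range_line (A (\<omega> 1))"
      using kill range coords by (simp_all add: E1_def shift_def)
    have "A (\<omega> 1) *v (E0 \<omega> *v v) = 0"
      using kill\<omega> by (simp add: E0_def matrix_vector_mul_assoc)
    then show "A (\<omega> 1) *v (E0 \<omega> *v v) \<in> range_line (E0 (shift \<omega>))"
      unfolding range_line_def by (metis matrix_vector_mult_0_right rangeI)
    have "A (\<omega> 1) *v (E1 \<omega> *v v) \<in> range_line (A (\<omega> 1))"
      unfolding range_line_def by (rule rangeI)
    then show "A (\<omega> 1) *v (E1 \<omega> *v v) \<in> range_line (E1 (shift \<omega>))"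
      using range\<omega> by simp
  next
    fix \<omega> assume "\<omega> \<in> shift_space k"
    then have "cocycle A 1 \<omega> ** E0 \<omega> = 0" "cocycle A 1 \<omega> ** E1 \<omega> \<noteq> 0"
      using kill keep coords by (simp_all add: E0_def E1_def)
    then show "matnorm (cocycle A 1 \<omega> ** E0 \<omega>) < matnorm (cocycle A 1 \<omega> ** E1 \<omega>)"
      using matnorm_nonneg[of "cocycle A 1 \<omega> ** E1 \<omega>"] by (simp add: matnorm_eq_0_iff order_less_le)
  qed
qed

lemma proj_unif_hyperbolic_if_disjoint:
  assumes rank1: "\<forall>i\<in>{1..k}. rank (A i) = 1"
    and disjoint: "kernels k A \<inter> ranges k A = {}"
  shows "proj_unif_hyperbolic k A"
proof -
  have "\<forall>i\<in>{1..k}. line (ker_line (A i))"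
    using line_ker_line rank1 by blast
  then obtain PK where PK: "\<forall>i\<in>{1..k}. line_proj (PK i) \<and> range_line (PK i) = ker_line (A i)"
    by (rule line_proj_family)
  have "\<forall>i\<in>{1..k}. line (range_line (A i))"
    using line_range_line rank1 by blast
  then obtain PR where PR: "\<forall>i\<in>{1..k}. line_proj (PR i) \<and> range_line (PR i) = range_line (A i)"
    by (rule line_proj_family)
  show ?thesis
  proof (rule proj_unif_hyperbolicI[where P = PK and Q = PR])
    fix i assume "i \<in> {1..k}"
    then show "line_proj (PK i) \<and> line_proj (PR i)" "A i ** PK i = 0"
      "range_line (PR i) = range_line (A i)"
      using PK PR by (simp_all add: matrix_mul_eq_0_iff_range_subset_ker)
  next
    fix i j assume ij: "i \<in> {1..k}" "j \<in> {1..k}"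
    have ker_range: "ker_line (A i) \<inter> range_line (A j) = {0}"
      using ker_line_inter_range_line_eq_0[OF rank1 disjoint ij] .
    then show "range_line (PK i) \<inter> range_line (PR j) = {0}"
      using PK PR ij by simp
    show "A i ** PR j \<noteq> 0"
      using PR ker_range line_range_line rank1 ij
      by (intro matrix_mul_neq_0_if_transversal) (simp_all add: Int_commute)
  qed
qed

lemma cocycle_eq_0_after_null_pair:
  assumes "A i ** A j = 0" "\<omega> (int m + 1) = j" "\<omega> (int m + 2) = i" "m + 2 \<le> n"
  shows "cocycle A n \<omega> = 0"
  using assms(4)
proof (induction n rule: dec_induct)
  case base
  have "cocycle A (m + 2) \<omega> = (A i ** A j) ** cocycle A m \<omega>"
    using assms(2,3) by (simp add: matrix_mul_assoc add.commute)
  with assms(1) show ?case by simp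
qed simp

lemma (in prob_space) prob_INT_indep_events_eq_0:
  fixes E :: "nat \<Rightarrow> 'a set"
  assumes indep: "indep_events E UNIV" and bound: "\<And>n. prob (E n) \<le> c" and "c < 1"
  shows "prob (\<Inter>n. E n) = 0"
proof -
  have events: "E n \<in> events" for n
    using indep by (auto simp: indep_events_def)
  have "prob (\<Inter>n. E n) \<le> c ^ Suc n" for n
  proof -
    have "prob (\<Inter>n. E n) \<le> prob (\<Inter>m\<le>n. E m)"
      using events by (intro finite_measure_mono) auto
    also have "\<dots> = (\<Prod>m\<le>n. prob (E m))"
      using indep by (auto simp: indep_events_def)
    also have "\<dots> \<le> (\<Prod>m\<le>n. c)"
      by (intro prod_mono) (simp add: bound)
    finally show ?thesis by simp
  qed
  moreover have "(\<lambda>n. c ^ Suc n) \<longlonglongrightarrow> 0"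
    using \<open>c < 1\<close> order_trans[OF measure_nonneg bound]
    by (intro LIMSEQ_Suc LIMSEQ_power_zero) auto
  ultimately have "prob (\<Inter>n. E n) \<le> 0"
    by (intro tendsto_le[OF _ _ tendsto_const]) (auto simp del: power_Suc)
  then show ?thesis
    by (simp add: measure_le_0_iff)
qed

lemma (in product_prob_space) indep_vars_coordinates:
  assumes "I \<noteq> {}"
  shows "P.indep_vars M (\<lambda>i \<omega>. \<omega> i) I"
proof (subst P.indep_vars_iff_distr_eq_PiM'[OF assms])
  have "distr (PiM I M) (PiM I M) (\<lambda>\<omega>. \<lambda>i\<in>I. \<omega> i) = distr (PiM I M) (PiM I M) (\<lambda>\<omega>. \<omega>)"
    by (rule distr_cong) (auto simp: space_PiM)
  also have "\<dots> = (\<Pi>\<^sub>M i\<in>I. distr (PiM I M) (M i) (\<lambda>\<omega>. \<omega> i))"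
    by (simp add: distr_id2 PiM_component cong: PiM_cong)
  finally show "distr (PiM I M) (PiM I M) (\<lambda>\<omega>. \<lambda>i\<in>I. \<omega> i) = (\<Pi>\<^sub>M i\<in>I. distr (PiM I M) (M i) (\<lambda>\<omega>. \<omega> i))" .
qed auto

lemma measure_bernoulli_pair:
  "measure (bernoulli_measure p) {\<omega> \<in> space (bernoulli_measure p). \<omega> t = a \<and> \<omega> (t + 1) = b}
    = pmf p a * pmf p b"
proof -
  interpret product_prob_space "\<lambda>_::int. measure_pmf p" UNIV
    by (rule product_prob_spaceI) (simp add: measure_pmf.prob_space_axioms)
  define X where "X s = (if s = t then {a} else {b})" for s
  have "{\<omega> \<in> space (bernoulli_measure p). \<omega> t = a \<and> \<omega> (t + 1) = b}
      = prod_emb UNIV (\<lambda>_. measure_pmf p) {t, t + 1} (PiE {t, t + 1} X)"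
    by (auto simp: prod_emb_def bernoulli_measure_def X_def space_PiM PiE_iff)
  also have "measure (bernoulli_measure p) \<dots> = pmf p a * pmf p b"
    unfolding bernoulli_measure_def
    by (subst measure_PiM_emb) (auto simp: X_def measure_pmf_single)
  finally show ?thesis .
qed

lemma prob_space_bernoulli_measure: "prob_space (bernoulli_measure p)"
  unfolding bernoulli_measure_def by (intro prob_space_PiM measure_pmf.prob_space_axioms)

lemma indep_events_bernoulli_pair_avoided:
  "prob_space.indep_events (bernoulli_measure p)
     (\<lambda>n. {\<omega> \<in> space (bernoulli_measure p). \<not> (\<omega> (2 * int n + 1) = a \<and> \<omega> (2 * int n + 2) = b)}) UNIV"
proof -
  interpret product_prob_space "\<lambda>_::int. measure_pmf p" UNIV
    by (rule product_prob_spaceI) (simp add: measure_pmf.prob_space_axioms)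
  define K where "K n = {2 * int n + 1, 2 * int n + 2}" for n :: nat
  have "P.indep_vars (\<lambda>n. PiM (K n) (\<lambda>_. measure_pmf p)) (\<lambda>n \<omega>. restrict (\<lambda>t. \<omega> t) (K n)) UNIV"
    by (rule P.indep_vars_restrict[OF indep_vars_coordinates]) (auto simp: disjoint_family_on_def K_def)
  then have "P.indep_events (\<lambda>n. {\<omega> \<in> space (PiM UNIV (\<lambda>_. measure_pmf p)).
      \<not> (restrict (\<lambda>t. \<omega> t) (K n) (2 * int n + 1) = a \<and> restrict (\<lambda>t. \<omega> t) (K n) (2 * int n + 2) = b)}) UNIV"
    by (rule P.indep_eventsI_indep_vars) (auto simp: K_def)
  then show ?thesis
    by (simp add: bernoulli_measure_def K_def)
qed

lemma AE_bernoulli_pair_occurs: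
  assumes "pmf p a > 0" "pmf p b > 0"
  shows "AE \<omega> in bernoulli_measure p. \<exists>m. \<omega> (int m + 1) = a \<and> \<omega> (int m + 2) = b"
proof -
  interpret prob_space "bernoulli_measure p"
    by (rule prob_space_bernoulli_measure)
  define E where "E n = {\<omega> \<in> space (bernoulli_measure p). \<not> (\<omega> (2 * int n + 1) = a \<and> \<omega> (2 * int n + 2) = b)}"
    for n
  have indep: "indep_events E UNIV"
    unfolding E_def by (rule indep_events_bernoulli_pair_avoided)
  then have events: "E n \<in> events" for n
    by (auto simp: indep_events_def)
  have "prob (E n) = 1 - pmf p a * pmf p b" for n
  proof -
    have "space (bernoulli_measure p) - E n
        = {\<omega> \<in> space (bernoulli_measure p). \<omega> (2 * int n + 1) = a \<and> \<omega> (2 * int n + 1 + 1) = b}"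
      by (auto simp: E_def add.assoc)
    then have "prob (space (bernoulli_measure p) - E n) = pmf p a * pmf p b"
      using measure_bernoulli_pair[of p "2 * int n + 1" a b] by simp
    then show ?thesis
      using prob_compl[OF events[of n]] by linarith
  qed
  then have "prob (\<Inter>n. E n) = 0"
    using assms by (intro prob_INT_indep_events_eq_0[OF indep]) auto
  then have "(\<Inter>n. E n) \<in> null_sets (bernoulli_measure p)"
    using events by (simp add: emeasure_eq_measure null_sets_def)
  then show ?thesis
  proof (rule AE_I', intro subsetI INT_I)
    fix \<omega> n
    assume "\<omega> \<in> {\<omega> \<in> space (bernoulli_measure p). \<not> (\<exists>m. \<omega> (int m + 1) = a \<and> \<omega> (int m + 2) = b)}"
    then have "\<omega> \<in> space (bernoulli_measure p)" "\<not> (\<omega> (int (2 * n) + 1) = a \<and> \<omega> (int (2 * n) + 2) = b)"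
      by blast+
    then show "\<omega> \<in> E n"
      by (simp add: E_def)
  qed
qed

lemma L1_minus_infty_if_null_pair:
  assumes "pmf p i > 0" "pmf p j > 0" and null: "A i ** A j = 0"
  shows "L1_minus_infty p A"
  unfolding L1_minus_infty_def
  using AE_bernoulli_pair_occurs[OF assms(2,1)]
proof (rule AE_mp, intro AE_I2 impI)
  fix \<omega> assume "\<exists>m. \<omega> (int m + 1) = j \<and> \<omega> (int m + 2) = i"
  then obtain m where m: "\<omega> (int m + 1) = j" "\<omega> (int m + 2) = i"
    by blast
  have "\<forall>\<^sub>F n in sequentially. ereal (1 / real n) * eln (matnorm (cocycle A n \<omega>)) = -\<infinity>"
    using eventually_ge_at_top[of "m + 2"]
    by eventually_elim (simp add: cocycle_eq_0_after_null_pair[OF null m] eln_def)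
  then show "((\<lambda>n. ereal (1 / real n) * eln (matnorm (cocycle A n \<omega>))) \<longlongrightarrow> -\<infinity>) sequentially"
    by (rule tendsto_eventually)
qed

theorem theorem4p17:
  fixes k :: nat and p :: "nat pmf" and A :: "nat \<Rightarrow> real^2^2"
  assumes support: "set_pmf p = {1..k}"
    and rank1: "\<forall>i\<in>{1..k}. rank (A i) = 1"
  shows "(setdist_P1 (kernels k A) (ranges k A) > 0 \<and> proj_unif_hyperbolic k A)
       \<or> (setdist_P1 (kernels k A) (ranges k A) = 0 \<and> has_null_word k A \<and> L1_minus_infty p A)"
proof -
  have lines: "\<forall>L\<in>kernels k A. line L" "\<forall>L\<in>ranges k A. line L"
    using rank1 line_ker_line line_range_line by (auto simp: kernels_def ranges_def)
  show ?thesis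
  proof (cases "kernels k A \<inter> ranges k A = {}")
    case True
    have "{1..k} \<noteq> {}"
      using support set_pmf_not_empty by metis
    then have "setdist_P1 (kernels k A) (ranges k A) > 0"
      using setdist_P1_pos lines True by (simp add: kernels_def ranges_def)
    with proj_unif_hyperbolic_if_disjoint[OF rank1 True] show ?thesis by blast
  next
    case False
    then obtain i j where ij: "i \<in> {1..k}" "j \<in> {1..k}" "ker_line (A i) = range_line (A j)"
      unfolding kernels_def ranges_def by blast
    then have null: "A i ** A j = 0"
      by (simp add: matrix_mul_eq_0_iff_range_subset_ker)
    have "setdist_P1 (kernels k A) (ranges k A) = 0"
      using setdist_P1_eq_0 lines False by blast
    moreover have "has_null_word k A"
      unfolding has_null_word_def using ij null
      by (intro exI[of _ "[j, i]"]) (simp add: word_prod_def)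
    moreover have "L1_minus_infty p A"
      using L1_minus_infty_if_null_pair[OF _ _ null] ij support by (simp add: pmf_positive)
    ultimately show ?thesis by blast
  qed
qed

end
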